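(* In the mirror triangle method with inexact directional derivatives (see context), for every $u\in\mathbb{R}^n$ and $k\ge0$, with $R_k=\|u_k-u\|_L$ and $M_k=\|\nabla f(y_{k+1})\|_2$, $$A_{k+1}\mathbb{E}_{k+1}f(x_{k+1})-A_kf(x_k)+\mathbb{E}_{k+1}V(u,u_{k+1})-V(u,u_k)\le\alpha_{k+1}f(u)+\frac{A_{k+1}}L\delta^2+A_{k+1}\delta\frac{M_k}{L\sqrt n}+\alpha_{k+1}\delta\frac{\sqrt n}{\sqrt L}R_k.$$
   Context: $\mathbb{E}_{k+1}$ denotes conditional expectation over the randomness of iteration $k+1$ given iterations $1,\dots,k$. $f:\mathbb{R}^n\to\mathbb{R}$ is convex, differentiable, with $\|\nabla f(x)-\nabla f(y)\|_2\le L\|x-y\|_2$. $\|x\|_L^2=L\sum_ix_i^2$, $V(x,y)=\frac12\|x-y\|_L^2$. For each $k\ge0$, $e_{k+1}$ is a random vector on the Euclidean unit sphere such that, conditionally on previous iterations, $\mathbb{E}[e_{k+1}^ie_{k+1}^j]=0$ for $i\ne j$ and $\mathbb{E}[(e_{k+1}^i)^2]=\frac1n$; $\tilde\delta_{k+1}$ is random with $|\tilde\delta_{k+1}|\le\delta$; $\tilde\nabla f(y)=n(\langle\nabla f(y),e_{k+1}\rangle+\tilde\delta_{k+1})e_{k+1}$. Method: $x_0=u_0=y_0$, $\alpha_0=1-\frac1n$, $A_0=\alpha_0$; for $k\ge0$: $\alpha_{k+1}=\frac{k+2n}{2n^2}$, $A_{k+1}=A_k+\alpha_{k+1}$, $y_{k+1}=\frac{\alpha_{k+1}u_k+A_kx_k}{A_{k+1}}$,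 $u_{k+1}=\arg\min_{x\in\mathbb{R}^n}\{V(x,u_k)+\alpha_{k+1}\langle\tilde\nabla f(y_{k+1}),x\rangle\}$, $x_{k+1}=y_{k+1}+n\frac{\alpha_{k+1}}{A_{k+1}}(u_{k+1}-u_k)$. *)

theory Defs
  imports "HOL-Probability.Probability"
begin

fun mtm_alpha :: "nat \<Rightarrow> nat \<Rightarrow> real" where
  "mtm_alpha n 0 = 1 - 1 / real n"
| "mtm_alpha n (Suc k) = (real k + 2 * real n) / (2 * (real n)\<^sup>2)"

definition mtm_A :: "nat \<Rightarrow> nat \<Rightarrow> real" where
  "mtm_A n k = (\<Sum>i\<in>{0..k}. mtm_alpha n i)"

definition normL_sq :: "real \<Rightarrow> real^'n \<Rightarrow> real" where
  "normL_sq L x = L * (\<Sum>i\<in>UNIV. (x $ i)\<^sup>2)"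

definition Vdiv :: "real \<Rightarrow> real^'n \<Rightarrow> real^'n \<Rightarrow> real" where
  "Vdiv L x y = (1/2) * normL_sq L (x - y)"

text \<open>Inexact directional-derivative gradient estimate, with g the gradient of f.\<close>
definition grad_est :: "(real^'n \<Rightarrow> real^'n) \<Rightarrow> real^'n \<Rightarrow> real \<Rightarrow> real^'n \<Rightarrow> real^'n" where
  "grad_est g e d y = (real CARD('n) * (g y \<bullet> e + d)) *\<^sub>R e"

definition mtm_y :: "nat \<Rightarrow> real^'n \<Rightarrow> real^'n \<Rightarrow> real^'n" where
  "mtm_y k x u = (1 / mtm_A CARD('n) (Suc k)) *\<^sub>R
      (mtm_alpha CARD('n) (Suc k) *\<^sub>R u + mtm_A CARD('n) k *\<^sub>R x)"

definition mtm_u_next :: "(real^'n \<Rightarrow> real^'n) \<Rightarrow> real \<Rightarrow> nat \<Rightarrow> real^'n \<Rightarrow> real^'n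
    \<Rightarrow> real^'n \<Rightarrow> real \<Rightarrow> real^'n" where
  "mtm_u_next g L k x u e d =
     arg_min (\<lambda>z. Vdiv L z u + mtm_alpha CARD('n) (Suc k) * (grad_est g e d (mtm_y k x u) \<bullet> z))
             (\<lambda>_. True)"

definition mtm_x_next :: "(real^'n \<Rightarrow> real^'n) \<Rightarrow> real \<Rightarrow> nat \<Rightarrow> real^'n \<Rightarrow> real^'n
    \<Rightarrow> real^'n \<Rightarrow> real \<Rightarrow> real^'n" where
  "mtm_x_next g L k x u e d =
     mtm_y k x u + (real CARD('n) * mtm_alpha CARD('n) (Suc k) / mtm_A CARD('n) (Suc k))
        *\<^sub>R (mtm_u_next g L k x u e d - u)"

text \<open>Iterates (x_k, u_k) for a given realisation of the random directions es (Suc k) = e_{k+1}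
  and errors ds (Suc k) = tilde delta_{k+1}; starting point x_0 = u_0.\<close>
primrec mtm_iter :: "(real^'n \<Rightarrow> real^'n) \<Rightarrow> real \<Rightarrow> real^'n \<Rightarrow> (nat \<Rightarrow> real^'n)
    \<Rightarrow> (nat \<Rightarrow> real) \<Rightarrow> nat \<Rightarrow> (real^'n) \<times> (real^'n)" where
  "mtm_iter g L x0 es ds 0 = (x0, x0)"
| "mtm_iter g L x0 es ds (Suc k) =
     (case mtm_iter g L x0 es ds k of (x, u) \<Rightarrow>
        (mtm_x_next g L k x u (es (Suc k)) (ds (Suc k)),
         mtm_u_next g L k x u (es (Suc k)) (ds (Suc k))))"

end

theory Submission
  imports Defs
begin

text \<open>Fix a realisation \<open>(e, d)\<close> of the random direction and error. The new point
  \<open>x\<^sub>k\<^sub>+\<^sub>1\<close> is \<open>y\<^sub>k\<^sub>+\<^sub>1 - c e\<close>, so the \<open>L\<close>-smoothness upper bound controls \<open>f(x\<^sub>k\<^sub>+\<^sub>1)\<close>, while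
  \<open>V(u, u\<^sub>k\<^sub>+\<^sub>1)\<close> expands exactly. Because \<open>n\<^sup>2 \<alpha>\<^sub>k\<^sub>+\<^sub>1\<^sup>2 \<le> A\<^sub>k\<^sub>+\<^sub>1\<close>, the quadratic terms in
  \<open>\<nabla>f(y\<^sub>k\<^sub>+\<^sub>1)\<bullet>e\<close> and \<open>d\<close> that remain are dominated by \<open>\<delta> \<bar>\<nabla>f(y\<^sub>k\<^sub>+\<^sub>1)\<bullet>e\<bar> + \<delta>\<^sup>2\<close>.
  Averaging over \<open>e\<close>, isotropy turns \<open>n (\<nabla>f(y\<^sub>k\<^sub>+\<^sub>1)\<bullet>e)((u - u\<^sub>k)\<bullet>e)\<close> into
  \<open>\<nabla>f(y\<^sub>k\<^sub>+\<^sub>1)\<bullet>(u - u\<^sub>k)\<close>, and Jensen bounds \<open>E\<bar>b\<bullet>e\<bar>\<close> by \<open>\<parallel>b\<parallel>/\<surd>n\<close>. Finally, since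
  \<open>y\<^sub>k\<^sub>+\<^sub>1\<close> is a convex combination of \<open>x\<^sub>k\<close> and \<open>u\<^sub>k\<close>, the gradient inequality of the convex
  \<open>f\<close> at \<open>y\<^sub>k\<^sub>+\<^sub>1\<close> absorbs the term \<open>\<alpha>\<^sub>k\<^sub>+\<^sub>1 \<nabla>f(y\<^sub>k\<^sub>+\<^sub>1)\<bullet>(u - u\<^sub>k)\<close>.\<close>

lemma has_real_derivative_along_line:
  fixes f :: "'a::real_inner \<Rightarrow> real"
  assumes grad: "\<And>x. (f has_derivative (\<lambda>h. g x \<bullet> h)) (at x)"
  shows "((\<lambda>t. f (y + t *\<^sub>R h)) has_real_derivative (g (y + t *\<^sub>R h) \<bullet> h)) (at t)"
proof -
  have "((\<lambda>t. y + t *\<^sub>R h) has_derivative (\<lambda>s. s *\<^sub>R h)) (at t)"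
    by (auto intro!: derivative_eq_intros)
  from has_derivative_compose[OF this grad]
  have "((\<lambda>t. f (y + t *\<^sub>R h)) has_derivative (\<lambda>s. g (y + t *\<^sub>R h) \<bullet> (s *\<^sub>R h))) (at t)"
    by simp
  moreover have "(\<lambda>s. g (y + t *\<^sub>R h) \<bullet> (s *\<^sub>R h)) = (*) (g (y + t *\<^sub>R h) \<bullet> h)"
    by (auto simp: mult.commute)
  ultimately show ?thesis
    by (simp add: has_field_derivative_def)
qed

lemma lipschitz_gradient_upper_bound:
  fixes f :: "'a::real_inner \<Rightarrow> real"
  assumes grad: "\<And>x. (f has_derivative (\<lambda>h. g x \<bullet> h)) (at x)"
    and lip: "\<And>x y. norm (g x - g y) \<le> L * norm (x - y)"
  shows "f x \<le> f y + g y \<bullet> (x - y) + L / 2 * (norm (x - y))\<^sup>2"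
proof -
  define h where "h = x - y"
  define \<phi> where "\<phi> t = f (y + t *\<^sub>R h) - t * (g y \<bullet> h) - L / 2 * t\<^sup>2 * (norm h)\<^sup>2" for t
  have "\<phi> 1 \<le> \<phi> 0"
  proof (rule DERIV_nonpos_imp_nonincreasing[of 0 1])
    fix t :: real
    assume t: "0 \<le> t" "t \<le> 1"
    have "DERIV \<phi> t :> g (y + t *\<^sub>R h) \<bullet> h - g y \<bullet> h - L / 2 * (2 * t) * (norm h)\<^sup>2"
      unfolding \<phi>_def by (auto intro!: derivative_eq_intros has_real_derivative_along_line[OF grad])
    moreover have "g (y + t *\<^sub>R h) \<bullet> h - g y \<bullet> h \<le> L * t * (norm h)\<^sup>2"
    proof -
      have "g (y + t *\<^sub>R h) \<bullet> h - g y \<bullet> h \<le> norm (g (y + t *\<^sub>R h) - g y) * norm h"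
        by (metis inner_diff_left norm_cauchy_schwarz)
      also have "\<dots> \<le> (L * norm (t *\<^sub>R h)) * norm h"
        using lip[of "y + t *\<^sub>R h" y] by (intro mult_right_mono) auto
      also have "\<dots> = L * t * (norm h)\<^sup>2"
        using t by (simp add: power2_eq_square)
      finally show ?thesis .
    qed
    ultimately show "\<exists>d. DERIV \<phi> t :> d \<and> d \<le> 0"
      by force
  qed simp
  then show ?thesis
    unfolding \<phi>_def h_def by simp
qed

lemma convex_gradient_lower_bound:
  fixes f :: "'a::real_inner \<Rightarrow> real"
  assumes convex: "convex_on UNIV f"
    and grad: "\<And>x. (f has_derivative (\<lambda>h. g x \<bullet> h)) (at x)"
  shows "f y + g y \<bullet> (x - y) \<le> f x"
proof -
  define h where "h = x - y"
  define \<phi> where "\<phi> t = f (y + t *\<^sub>R h)" for t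
  have "convex_on UNIV \<phi>"
  proof (rule convex_onI)
    fix t a b :: real
    assume t: "0 < t" "t < 1"
    have "y + ((1 - t) *\<^sub>R a + t *\<^sub>R b) *\<^sub>R h = (1 - t) *\<^sub>R (y + a *\<^sub>R h) + t *\<^sub>R (y + b *\<^sub>R h)"
      by (simp add: algebra_simps)
    then show "\<phi> ((1 - t) *\<^sub>R a + t *\<^sub>R b) \<le> (1 - t) * \<phi> a + t * \<phi> b"
      unfolding \<phi>_def using convex_onD[OF convex, of t] t by simp
  qed simp
  then have "(g y \<bullet> h) * (1 - 0) \<le> \<phi> 1 - \<phi> 0"
    by (rule convex_on_imp_above_tangent)
      (use has_real_derivative_along_line[OF grad, of y h 0] in \<open>auto simp: \<phi>_def[abs_def]\<close>)
  then show ?thesis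
    unfolding \<phi>_def h_def by simp
qed

lemma convex_gradient_combination_bound:
  fixes f :: "'a::real_inner \<Rightarrow> real"
  assumes convex: "convex_on UNIV f"
    and grad: "\<And>x. (f has_derivative (\<lambda>h. g x \<bullet> h)) (at x)"
    and a: "a \<ge> 0" and b: "b \<ge> 0"
    and y: "(a + b) *\<^sub>R y = a *\<^sub>R x + b *\<^sub>R w"
  shows "(a + b) * f y \<le> a * f x + b * f z - b * (g y \<bullet> (z - w))"
proof -
  have "a * (f y + g y \<bullet> (x - y)) + b * (f y + g y \<bullet> (z - y)) \<le> a * f x + b * f z"
    using convex_gradient_lower_bound[OF convex grad] a b by (intro add_mono mult_left_mono) auto
  moreover have "a *\<^sub>R (x - y) + b *\<^sub>R (z - y) = b *\<^sub>R (z - w)"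
    using y by (simp add: algebra_simps)
  then have "a * (g y \<bullet> (x - y)) + b * (g y \<bullet> (z - y)) = b * (g y \<bullet> (z - w))"
    by (metis inner_add_right inner_scaleR_right)
  ultimately show ?thesis
    by (simp add: algebra_simps)
qed

lemma normL_sq_eq: "normL_sq L x = L * (norm x)\<^sup>2"
proof -
  have "(norm x)\<^sup>2 = x \<bullet> x"
    by (rule power2_norm_eq_inner)
  then show ?thesis
    by (simp add: normL_sq_def inner_vec_def power2_eq_square)
qed

lemma Vdiv_eq: "Vdiv L x y = L / 2 * (norm (x - y))\<^sup>2"
  by (simp add: Vdiv_def normL_sq_eq)

lemma arg_min_Vdiv_plus_linear:
  fixes u G :: "real^'n"
  assumes L: "L > 0"
  shows "arg_min (\<lambda>z. Vdiv L z u + c * (G \<bullet> z)) (\<lambda>_. True) = u - (c / L) *\<^sub>R G"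
proof -
  define z\<^sub>0 where "z\<^sub>0 = u - (c / L) *\<^sub>R G"
  define F where "F z = Vdiv L z u + c * (G \<bullet> z)" for z
  \<comment> \<open>completing the square\<close>
  have F: "F z = F z\<^sub>0 + L / 2 * (norm (z - z\<^sub>0))\<^sup>2" for z
  proof -
    define w where "w = z - z\<^sub>0"
    have z_u: "z - u = w - (c / L) *\<^sub>R G"
      unfolding z\<^sub>0_def w_def by simp
    have zu: "(norm (z - u))\<^sup>2 = (norm w)\<^sup>2 - 2 * (c / L) * (w \<bullet> G) + (c / L)\<^sup>2 * (norm G)\<^sup>2"
      unfolding z_u power2_norm_eq_inner
      by (simp add: inner_diff_left inner_diff_right inner_commute power2_eq_square algebra_simps)
    have z\<^sub>0u: "(norm (z\<^sub>0 - u))\<^sup>2 = (c / L)\<^sup>2 * (norm G)\<^sup>2"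
      unfolding z\<^sub>0_def by (simp add: power_mult_distrib power_divide)
    have Gz: "G \<bullet> z = G \<bullet> w + G \<bullet> z\<^sub>0"
      unfolding w_def by (simp add: inner_diff_right)
    show ?thesis
      unfolding F_def Vdiv_eq zu z\<^sub>0u Gz w_def[symmetric] using L
      by (simp add: field_simps power2_eq_square inner_commute)
  qed
  show ?thesis
    unfolding F_def[symmetric] z\<^sub>0_def[symmetric]
  proof (rule arg_minI[where x = z\<^sub>0])
    fix z
    show "\<not> F z < F z\<^sub>0"
      using F[of z] L by (simp add: not_less)
  next
    fix z
    assume "\<forall>y. True \<longrightarrow> \<not> F y < F z"
    then have "\<not> F z\<^sub>0 < F z"
      by blast
    then have "L / 2 * (norm (z - z\<^sub>0))\<^sup>2 \<le> 0"
      using F[of z] by linarith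
    then show "z = z\<^sub>0"
      using L by (simp add: mult_le_0_iff)
  qed simp
qed

lemma integrable_continuous_AE_compact:
  fixes \<phi> :: "'a::topological_space \<Rightarrow> 'b::{banach, second_countable_topology}"
  assumes "finite_measure M" and sets_M: "sets M = sets borel"
    and K: "compact K" "AE x in M. x \<in> K"
    and cont: "continuous_on UNIV \<phi>"
  shows "integrable M \<phi>"
proof -
  interpret finite_measure M by fact
  have "measurable M borel = measurable borel (borel :: 'b measure)"
    by (rule measurable_cong_sets[OF sets_M refl])
  then have "\<phi> \<in> borel_measurable M"
    using borel_measurable_continuous_onI[OF cont] by simp
  moreover obtain B where B: "\<And>x. x \<in> K \<Longrightarrow> norm (\<phi> x) \<le> B"
    using compact_imp_bounded[OF compact_continuous_image[OF continuous_on_subset[OF cont] K(1)]]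
    by (auto simp: bounded_iff)
  have "AE x in M. norm (\<phi> x) \<le> B"
    using K(2) by (auto intro: B elim: eventually_mono)
  ultimately show ?thesis
    using integrable_const_bound by blast
qed

lemma isotropic_inner_mult_integral:
  fixes E :: "'a \<Rightarrow> real^'n" and a b :: "real^'n"
  assumes int: "\<And>i j. integrable M (\<lambda>x. E x $ i * E x $ j)"
    and cross: "\<And>i j. i \<noteq> j \<Longrightarrow> (\<integral>x. E x $ i * E x $ j \<partial>M) = 0"
    and diag: "\<And>i. (\<integral>x. (E x $ i)\<^sup>2 \<partial>M) = c"
  shows "(\<integral>x. (a \<bullet> E x) * (b \<bullet> E x) \<partial>M) = c * (a \<bullet> b)"
proof -
  have moment: "(\<integral>x. E x $ i * E x $ j \<partial>M) = (if i = j then c else 0)" for i j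
    using cross[of i j] diag[of i] by (auto simp: power2_eq_square)
  have "(a \<bullet> E x) * (b \<bullet> E x) = (\<Sum>i\<in>UNIV. \<Sum>j\<in>UNIV. (a $ i * b $ j) * (E x $ i * E x $ j))" for x
    by (simp add: inner_vec_def sum_product algebra_simps)
  then have "(\<integral>x. (a \<bullet> E x) * (b \<bullet> E x) \<partial>M)
      = (\<Sum>i\<in>UNIV. \<Sum>j\<in>UNIV. (a $ i * b $ j) * (\<integral>x. E x $ i * E x $ j \<partial>M))"
    by (simp add: int)
  also have "\<dots> = c * (a \<bullet> b)"
    unfolding moment by (simp add: if_distrib sum.delta inner_vec_def sum_distrib_left mult_ac cong: if_cong)
  finally show ?thesis .
qed

lemma (in prob_space) expectation_abs_le_sqrt_second_moment:
  fixes X :: "'a \<Rightarrow> real"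
  assumes "integrable M X" and "integrable M (\<lambda>x. (X x)\<^sup>2)"
  shows "expectation (\<lambda>x. \<bar>X x\<bar>) \<le> sqrt (expectation (\<lambda>x. (X x)\<^sup>2))"
proof -
  have "(expectation (\<lambda>x. \<bar>X x\<bar>))\<^sup>2 \<le> expectation (\<lambda>x. \<bar>X x\<bar>\<^sup>2)"
    by (rule jensens_inequality[where I = UNIV]) (use assms in \<open>auto intro: convex_power2\<close>)
  then show ?thesis
    by (simp add: real_le_rsqrt)
qed

lemma mtm_A_Suc: "mtm_A n (Suc k) = mtm_A n k + mtm_alpha n (Suc k)"
  by (simp add: mtm_A_def)

lemma mtm_A_closed_form:
  assumes "n \<ge> 1"
  shows "mtm_A n k = 1 - 1 / real n + (2 * real n * real k + real k * (real k - 1) / 2) / (2 * (real n)\<^sup>2)"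
proof (induction k)
  case 0
  then show ?case by (simp add: mtm_A_def)
next
  case (Suc k)
  show ?case
    unfolding mtm_A_Suc Suc.IH using assms by (simp add: field_simps power2_eq_square)
qed

lemma mtm_A_nonneg:
  assumes "n \<ge> 1"
  shows "mtm_A n k \<ge> 0"
proof -
  have "mtm_alpha n i \<ge> 0" for i
    using assms by (cases i) (auto simp: field_simps)
  then show ?thesis
    unfolding mtm_A_def by (simp add: sum_nonneg)
qed

lemma mtm_alpha_Suc_pos: "n \<ge> 1 \<Longrightarrow> mtm_alpha n (Suc k) > 0"
  by simp

lemma mtm_sq_alpha_le_A:
  assumes "n \<ge> 1"
  shows "(real n)\<^sup>2 * (mtm_alpha n (Suc k))\<^sup>2 \<le> mtm_A n (Suc k)"
proof -
  have "mtm_A n (Suc k) - (real n)\<^sup>2 * (mtm_alpha n (Suc k))\<^sup>2 = real k / (4 * (real n)\<^sup>2)"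
    unfolding mtm_A_closed_form[OF assms] using assms by (simp add: field_simps power2_eq_square)
  moreover have "real k / (4 * (real n)\<^sup>2) \<ge> 0"
    by simp
  ultimately show ?thesis
    by linarith
qed

lemma mtm_y_combination:
  "mtm_A CARD('n) (Suc k) *\<^sub>R mtm_y k x u
    = mtm_A CARD('n) k *\<^sub>R x + mtm_alpha CARD('n) (Suc k) *\<^sub>R (u :: real^'n)"
proof -
  have n: "CARD('n) \<ge> 1"
    by (simp add: Suc_le_eq)
  show ?thesis
    using mtm_A_nonneg[OF n, of k] mtm_alpha_Suc_pos[OF n, of k]
    by (simp add: mtm_y_def mtm_A_Suc add.commute)
qed

lemma mtm_u_next_eq:
  assumes "L > 0"
  shows "mtm_u_next g L k x u e d
    = u - (mtm_alpha CARD('n) (Suc k) / L) *\<^sub>R grad_est g e d (mtm_y k x (u :: real^'n))"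
  unfolding mtm_u_next_def by (rule arg_min_Vdiv_plus_linear[OF assms])

subsection \<open>One step for a fixed realisation\<close>

lemma step_error_bound:
  fixes a d \<delta> r :: real
  assumes r: "0 \<le> r" "r \<le> 1" and d: "\<bar>d\<bar> \<le> \<delta>"
  shows "a\<^sup>2 * (r * (r - 1) / 2) + a * d * r\<^sup>2 + d\<^sup>2 * ((r\<^sup>2 + r) / 2) \<le> \<delta> * \<bar>a\<bar> + \<delta>\<^sup>2"
proof -
  have r2: "0 \<le> r\<^sup>2" "r\<^sup>2 \<le> 1"
    using r by (auto simp: power_le_one)
  have "a\<^sup>2 * (r * (r - 1) / 2) \<le> 0"
    using r by (intro mult_nonneg_nonpos) (auto simp: mult_nonneg_nonpos)
  moreover have "a * d * r\<^sup>2 \<le> \<delta> * \<bar>a\<bar>"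
  proof -
    have ad: "a * d \<le> \<bar>a\<bar> * \<bar>d\<bar>"
      by (metis abs_ge_self abs_mult)
    have "a * d * r\<^sup>2 \<le> (\<bar>a\<bar> * \<bar>d\<bar>) * 1"
      using mult_mono[OF ad r2(2) _ r2(1)] by simp
    also have "\<dots> \<le> \<delta> * \<bar>a\<bar>"
      using mult_left_mono[OF d abs_ge_zero[of a]] by (simp add: mult.commute)
    finally show ?thesis .
  qed
  moreover have "d\<^sup>2 * ((r\<^sup>2 + r) / 2) \<le> \<delta>\<^sup>2 * 1"
  proof (rule mult_mono)
    show "d\<^sup>2 \<le> \<delta>\<^sup>2"
      using power_mono[OF d, of 2] by simp
  qed (use r r2 in auto)
  ultimately show ?thesis
    by linarith
qed

lemma mtm_step_realisation_bound:
  fixes f :: "real^'n \<Rightarrow> real" and y uk u e :: "real^'n"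
  defines "N \<equiv> real CARD('n)"
  assumes grad: "\<And>x. (f has_derivative (\<lambda>h. g x \<bullet> h)) (at x)"
    and lip: "\<And>x y. norm (g x - g y) \<le> L * norm (x - y)"
    and L: "L > 0" and \<alpha>: "\<alpha> \<ge> 0" and A: "A > 0" and \<alpha>A: "N\<^sup>2 * \<alpha>\<^sup>2 \<le> A"
    and e: "norm e = 1" and d: "\<bar>d\<bar> \<le> \<delta>"
    and u': "u' = uk - (\<alpha> / L) *\<^sub>R grad_est g e d y"
    and x': "x' = y + (N * \<alpha> / A) *\<^sub>R (u' - uk)"
  shows "A * f x' + Vdiv L u u'
    \<le> A * f y + Vdiv L u uk + \<alpha> * N * (g y \<bullet> e) * ((u - uk) \<bullet> e)
       + \<alpha> * N * \<delta> * \<bar>(u - uk) \<bullet> e\<bar> + A / L * \<delta> * \<bar>g y \<bullet> e\<bar> + A / L * \<delta>\<^sup>2"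
proof -
  define a where "a = g y \<bullet> e"
  define v where "v = u - uk"
  define r where "r = N\<^sup>2 * \<alpha>\<^sup>2 / A"
  define c where "c = r * (a + d) / L"
  have N: "N \<ge> 0"
    unfolding N_def by simp
  have ee: "e \<bullet> e = 1"
    using e by (simp add: power2_norm_eq_inner[symmetric])
  have u'_eq: "u - u' = v + (\<alpha> * N * (a + d) / L) *\<^sub>R e"
    unfolding u' v_def a_def grad_est_def N_def by (simp add: algebra_simps add_divide_distrib)
  have x'_eq: "x' = y - c *\<^sub>R e"
    unfolding x' u' c_def r_def a_def grad_est_def N_def using A L
    by (simp add: algebra_simps add_divide_distrib power2_eq_square)
  have smooth: "f x' \<le> f y - c * a + L / 2 * c\<^sup>2"
    using lipschitz_gradient_upper_bound[OF grad lip, of x' y] e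
    unfolding x'_eq a_def by (simp add: power_mult_distrib)
  have V: "Vdiv L u u' = Vdiv L u uk + \<alpha> * N * (a + d) * (v \<bullet> e) + (\<alpha> * N * (a + d))\<^sup>2 / (2 * L)"
  proof -
    have "(norm (u - u'))\<^sup>2 = (norm v)\<^sup>2 + 2 * (\<alpha> * N * (a + d) / L) * (v \<bullet> e) + (\<alpha> * N * (a + d) / L)\<^sup>2"
      unfolding u'_eq power2_norm_eq_inner using ee
      by (simp add: inner_add_left inner_add_right inner_commute power2_eq_square algebra_simps)
    moreover have "L / 2 * ((norm v)\<^sup>2 + 2 * (P / L) * (v \<bullet> e) + (P / L)\<^sup>2)
        = L / 2 * (norm v)\<^sup>2 + P * (v \<bullet> e) + P\<^sup>2 / (2 * L)" for P
      using L by (simp add: field_simps power2_eq_square)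
    ultimately show ?thesis
      unfolding Vdiv_eq v_def[symmetric] by simp
  qed
  have "r \<ge> 0" "r \<le> 1"
    unfolding r_def using \<alpha>A A by auto
  from step_error_bound[OF this d, of a]
  have "A / L * (a\<^sup>2 * (r * (r - 1) / 2) + a * d * r\<^sup>2 + d\<^sup>2 * ((r\<^sup>2 + r) / 2))
      \<le> A / L * (\<delta> * \<bar>a\<bar> + \<delta>\<^sup>2)"
    using A L by (intro mult_left_mono) auto
  \<comment> \<open>the quadratic terms of both steps combine into the form bounded by \<open>step_error_bound\<close>\<close>
  moreover have "A * (- c * a + L / 2 * c\<^sup>2) + \<alpha> * N * d * (v \<bullet> e) + (\<alpha> * N * (a + d))\<^sup>2 / (2 * L)
      = \<alpha> * N * d * (v \<bullet> e) + A / L * (a\<^sup>2 * (r * (r - 1) / 2) + a * d * r\<^sup>2 + d\<^sup>2 * ((r\<^sup>2 + r) / 2))"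
    unfolding c_def r_def using A L by (simp add: field_simps power2_eq_square)
  moreover have "\<alpha> * N * d * (v \<bullet> e) \<le> \<alpha> * N * \<delta> * \<bar>v \<bullet> e\<bar>"
  proof -
    have "d * (v \<bullet> e) \<le> \<bar>d\<bar> * \<bar>v \<bullet> e\<bar>"
      by (metis abs_ge_self abs_mult)
    also have "\<dots> \<le> \<delta> * \<bar>v \<bullet> e\<bar>"
      using d by (rule mult_right_mono) simp
    finally show ?thesis
      using \<alpha> N by (simp add: mult_left_mono mult.assoc)
  qed
  moreover have "A * f x' \<le> A * (f y - c * a + L / 2 * c\<^sup>2)"
    using smooth A by (intro mult_left_mono) auto
  ultimately show ?thesis
    unfolding V a_def[symmetric] v_def[symmetric] by (simp add: algebra_simps)
qed

subsection \<open>Averaging over the random direction\<close>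

locale random_direction_noise = prob_space M
  for M :: "((real^'n) \<times> real) measure" +
  fixes \<delta> :: real
  assumes sets_M: "sets M = sets borel"
    and supp: "AE p in M. norm (fst p) = 1 \<and> \<bar>snd p\<bar> \<le> \<delta>"
    and cross: "\<And>i j. i \<noteq> j \<Longrightarrow> (\<integral>p. (fst p $ i) * (fst p $ j) \<partial>M) = 0"
    and diag: "\<And>i. (\<integral>p. (fst p $ i)\<^sup>2 \<partial>M) = 1 / real CARD('n)"
begin

lemma delta_nonneg: "\<delta> \<ge> 0"
proof (rule ccontr)
  assume "\<not> \<delta> \<ge> 0"
  have "AE p in M. False"
    using supp by (rule eventually_mono) (use \<open>\<not> \<delta> \<ge> 0\<close> in force)
  then show False
    by simp
qed

lemma integrable_continuous:
  fixes \<phi> :: "(real^'n) \<times> real \<Rightarrow> real"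
  assumes "continuous_on UNIV \<phi>"
  shows "integrable M \<phi>"
proof (rule integrable_continuous_AE_compact[OF finite_measure_axioms sets_M _ _ assms])
  show "compact (sphere (0 :: real^'n) 1 \<times> cball (0 :: real) \<delta>)"
    by (intro compact_Times) auto
  show "AE p in M. p \<in> sphere 0 1 \<times> cball 0 \<delta>"
    using supp by (rule eventually_mono) (auto simp: mem_Times_iff)
qed

lemma integral_inner_mult:
  "(\<integral>p. (a \<bullet> fst p) * (b \<bullet> fst p) \<partial>M) = (a \<bullet> b) / real CARD('n)"
  using isotropic_inner_mult_integral[where E = fst, OF _ cross diag]
  by (simp add: integrable_continuous continuous_intros)

lemma integral_abs_inner_le: "(\<integral>p. \<bar>b \<bullet> fst p\<bar> \<partial>M) \<le> norm b / sqrt (real CARD('n))"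
proof -
  have "(\<integral>p. \<bar>b \<bullet> fst p\<bar> \<partial>M) \<le> sqrt (\<integral>p. (b \<bullet> fst p)\<^sup>2 \<partial>M)"
    by (rule expectation_abs_le_sqrt_second_moment) (auto intro!: integrable_continuous continuous_intros)
  also have "(\<integral>p. (b \<bullet> fst p)\<^sup>2 \<partial>M) = (norm b)\<^sup>2 / real CARD('n)"
    using integral_inner_mult[of b b] by (simp add: power2_eq_square dot_square_norm)
  finally show ?thesis
    by (simp add: real_sqrt_divide)
qed

lemma expected_step_bound:
  fixes f :: "real^'n \<Rightarrow> real" and y uk u :: "real^'n"
  defines "N \<equiv> real CARD('n)"
  assumes grad: "\<And>x. (f has_derivative (\<lambda>h. g x \<bullet> h)) (at x)"
    and lip: "\<And>x y. norm (g x - g y) \<le> L * norm (x - y)"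
    and L: "L > 0" and \<alpha>: "\<alpha> \<ge> 0" and A: "A > 0" and \<alpha>A: "N\<^sup>2 * \<alpha>\<^sup>2 \<le> A"
  defines "U p \<equiv> uk - (\<alpha> / L) *\<^sub>R grad_est g (fst p) (snd p) y"
    and "X p \<equiv> y + (N * \<alpha> / A) *\<^sub>R (uk - (\<alpha> / L) *\<^sub>R grad_est g (fst p) (snd p) y - uk)"
  shows "A * (\<integral>p. f (X p) \<partial>M) + (\<integral>p. Vdiv L u (U p) \<partial>M)
    \<le> A * f y + Vdiv L u uk + \<alpha> * (g y \<bullet> (u - uk)) + \<alpha> * \<delta> * sqrt N * norm (u - uk)
       + A * \<delta> * norm (g y) / (L * sqrt N) + A / L * \<delta>\<^sup>2"
proof -
  define v where "v = u - uk"
  define \<Psi> where "\<Psi> p = A * f y + Vdiv L u uk + \<alpha> * N * ((g y \<bullet> fst p) * (v \<bullet> fst p))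
      + \<alpha> * N * \<delta> * \<bar>v \<bullet> fst p\<bar> + A / L * \<delta> * \<bar>g y \<bullet> fst p\<bar> + A / L * \<delta>\<^sup>2" for p :: "(real^'n) \<times> real"
  have N: "N > 0"
    unfolding N_def by simp
  have "continuous_on UNIV f"
    using grad has_derivative_continuous continuous_at_imp_continuous_on by blast
  moreover have "continuous_on UNIV X" "continuous_on UNIV U"
    unfolding X_def U_def grad_est_def by (intro continuous_intros)+
  ultimately have int_fX: "integrable M (\<lambda>p. f (X p))" and int_VU: "integrable M (\<lambda>p. Vdiv L u (U p))"
    unfolding Vdiv_eq by (auto intro!: integrable_continuous continuous_intros
        intro: continuous_on_compose2[of UNIV f])
  have int_inner: "integrable M (\<lambda>p. (g y \<bullet> fst p) * (v \<bullet> fst p))"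
    and int_abs: "integrable M (\<lambda>p. \<bar>b \<bullet> fst p\<bar>)" for b :: "real^'n"
    by (auto intro!: integrable_continuous continuous_intros)
  have "AE p in M. A * f (X p) + Vdiv L u (U p) \<le> \<Psi> p"
    using supp by eventually_elim
      (use mtm_step_realisation_bound[OF grad lip L \<alpha> A \<alpha>A[unfolded N_def]] in
        \<open>auto simp: X_def U_def \<Psi>_def v_def N_def mult.assoc\<close>)
  then have "(\<integral>p. A * f (X p) + Vdiv L u (U p) \<partial>M) \<le> (\<integral>p. \<Psi> p \<partial>M)"
    by (rule integral_mono_AE[rotated 2]) (auto simp: \<Psi>_def int_fX int_VU int_inner int_abs)
  also have "(\<integral>p. \<Psi> p \<partial>M) = A * f y + Vdiv L u uk + \<alpha> * (g y \<bullet> v)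
      + \<alpha> * N * \<delta> * (\<integral>p. \<bar>v \<bullet> fst p\<bar> \<partial>M) + A / L * \<delta> * (\<integral>p. \<bar>g y \<bullet> fst p\<bar> \<partial>M) + A / L * \<delta>\<^sup>2"
    using N by (simp add: \<Psi>_def int_inner int_abs prob_space integral_inner_mult N_def)
  also have "\<dots> \<le> A * f y + Vdiv L u uk + \<alpha> * (g y \<bullet> v)
      + \<alpha> * N * \<delta> * (norm v / sqrt N) + A / L * \<delta> * (norm (g y) / sqrt N) + A / L * \<delta>\<^sup>2"
    using \<alpha> A L N delta_nonneg integral_abs_inner_le unfolding N_def
    by (intro add_mono mult_left_mono order_refl) auto
  also have "\<alpha> * N * \<delta> * (norm v / sqrt N) = \<alpha> * \<delta> * sqrt N * norm v"
    using N by (simp add: field_simps flip: real_sqrt_mult)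
  finally show ?thesis
    using int_fX int_VU by (simp add: v_def)
qed

end

theorem lemma14:
  fixes f :: "real^'n \<Rightarrow> real" and g :: "real^'n \<Rightarrow> real^'n"
    and L \<delta> :: real and x0 u :: "real^'n"
    and es :: "nat \<Rightarrow> real^'n" and ds :: "nat \<Rightarrow> real"
    and M :: "((real^'n) \<times> real) measure" and k :: nat
  assumes convex: "convex_on UNIV f"
    and grad: "\<And>x. (f has_derivative (\<lambda>h. g x \<bullet> h)) (at x)"
    and lip: "\<And>x y. norm (g x - g y) \<le> L * norm (x - y)"
    and Lpos: "L > 0"
    and past: "\<And>i. 1 \<le> i \<Longrightarrow> i \<le> k \<Longrightarrow> norm (es i) = 1 \<and> \<bar>ds i\<bar> \<le> \<delta>"
    and prob: "prob_space M"
    and sets_M: "sets M = sets borel"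
    and supp: "AE p in M. norm (fst p) = 1 \<and> \<bar>snd p\<bar> \<le> \<delta>"
    and cross: "\<And>i j. i \<noteq> j \<Longrightarrow> (\<integral>p. (fst p $ i) * (fst p $ j) \<partial>M) = 0"
    and diag: "\<And>i. (\<integral>p. (fst p $ i)\<^sup>2 \<partial>M) = 1 / real CARD('n)"
  shows
    "(let n = CARD('n);
          xk = fst (mtm_iter g L x0 es ds k);
          uk = snd (mtm_iter g L x0 es ds k);
          yk1 = mtm_y k xk uk;
          Rk = sqrt (normL_sq L (uk - u));
          Mk = norm (g yk1)
      in mtm_A n (Suc k) * (\<integral>p. f (mtm_x_next g L k xk uk (fst p) (snd p)) \<partial>M)
         - mtm_A n k * f xk
         + (\<integral>p. Vdiv L u (mtm_u_next g L k xk uk (fst p) (snd p)) \<partial>M)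
         - Vdiv L u uk
       \<le> mtm_alpha n (Suc k) * f u + mtm_A n (Suc k) / L * \<delta>\<^sup>2
          + mtm_A n (Suc k) * \<delta> * Mk / (L * sqrt (real n))
          + mtm_alpha n (Suc k) * \<delta> * sqrt (real n) / sqrt L * Rk)"
proof -
  interpret random_direction_noise M \<delta>
    using prob sets_M supp cross diag
    by (simp add: random_direction_noise_def random_direction_noise_axioms_def)
  define xk where "xk = fst (mtm_iter g L x0 es ds k)"
  define uk where "uk = snd (mtm_iter g L x0 es ds k)"
  define y where "y = mtm_y k xk uk"
  define \<alpha> where "\<alpha> = mtm_alpha CARD('n) (Suc k)"
  have n: "CARD('n) \<ge> 1"
    by (simp add: Suc_le_eq)
  have \<alpha>: "\<alpha> > 0"
    unfolding \<alpha>_def using mtm_alpha_Suc_pos[OF n] .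
  have "mtm_A CARD('n) (Suc k) * (\<integral>p. f (mtm_x_next g L k xk uk (fst p) (snd p)) \<partial>M)
      + (\<integral>p. Vdiv L u (mtm_u_next g L k xk uk (fst p) (snd p)) \<partial>M)
    \<le> mtm_A CARD('n) (Suc k) * f y + Vdiv L u uk + \<alpha> * (g y \<bullet> (u - uk))
      + \<alpha> * \<delta> * sqrt CARD('n) * norm (u - uk)
      + mtm_A CARD('n) (Suc k) * \<delta> * norm (g y) / (L * sqrt CARD('n))
      + mtm_A CARD('n) (Suc k) / L * \<delta>\<^sup>2"
    unfolding mtm_x_next_def mtm_u_next_eq[OF Lpos] y_def \<alpha>_def
    by (rule expected_step_bound[OF grad lip Lpos])
      (use mtm_alpha_Suc_pos[OF n] mtm_A_nonneg[OF n] mtm_sq_alpha_le_A[OF n] in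
        \<open>auto simp: mtm_A_Suc intro: add_nonneg_pos\<close>)
  moreover have "mtm_A CARD('n) (Suc k) * f y
      \<le> mtm_A CARD('n) k * f xk + \<alpha> * f u - \<alpha> * (g y \<bullet> (u - uk))"
    unfolding mtm_A_Suc y_def \<alpha>_def
    by (rule convex_gradient_combination_bound[OF convex grad mtm_A_nonneg[OF n]
          less_imp_le[OF mtm_alpha_Suc_pos[OF n]] mtm_y_combination[unfolded mtm_A_Suc]])
  moreover have "sqrt (normL_sq L (uk - u)) = sqrt L * norm (u - uk)"
    using Lpos by (simp add: normL_sq_eq real_sqrt_mult norm_minus_commute)
  ultimately show ?thesis
    unfolding Let_def xk_def[symmetric] uk_def[symmetric] y_def[symmetric] \<alpha>_def[symmetric]
    using Lpos by simp
qed

end
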